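(* Let $\mathfrak{A}=\{\mathscr{M}^{KI},\mathscr{M}^{KK},\mathscr{A}^{KI},\mathscr{A}^{KK},\mathscr{H}^{KI},\mathscr{H}^{KK}\}$. Then the graph parameters $p_{\mathfrak{A}}$ and $\widetilde{\omega}$ are equivalent, i.e. there exist functions $f,g\colon\mathbb{N}\to\mathbb{N}$ such that $p_{\mathfrak{A}}(G)\le f(\widetilde{\omega}(G))$ and $\widetilde{\omega}(G)\le g(p_{\mathfrak{A}}(G))$ for every finite graph $G$.
   Context: Two vertices are equivalent if they lie in exactly the same maximal cliques; $\widetilde{\omega}(G)$ is the maximum over maximal cliques $K$ of $G$ of the number of equivalence classes meeting $K$. For each $n\ge1$ let $X=\{x_1,\dots,x_n\}$, $Y=\{y_1,\dots,y_n\}$ be disjoint ordered sets. The matching has edges $x_iy_i$; the anti-matching has edges $x_iy_j$ for $i\neq j$; the half-graph has edges $x_iy_j$ for $i\le j$. $\mathscr{M}^{KI}_n$ (resp. $\mathscr{A}^{KI}_n$, $\mathscr{H}^{KI}_n$) is the graph on $X\cup Y$ consisting of the matching (resp. anti-matching, half-graph) between $X$ and $Y$ together with all edges within $X$ (so $X$ is a clique and $Y$ independent); $\mathscr{M}^{KK}_n$, $\mathscr{A}^{KK}_n$, $\mathscr{H}^{KK}_n$ are obtained by additionally making $Y$ a clique. For a family $\mathfrak{F}$ of sequences $\langle\mathscr{X}_n\rangle_n$, $p_{\mathfrak{F}}(G)$ is the maximum $n$ such that some $\mathscr{X}\in\mathfrak{F}$ has $\mathscr{X}_n$ as an induced subgraph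 of $G$. *)

theory Defs
  imports Main
begin

definition graph :: "'v set \<Rightarrow> ('v \<Rightarrow> 'v \<Rightarrow> bool) \<Rightarrow> bool" where
  "graph V E \<longleftrightarrow> finite V \<and> (\<forall>x y. E x y \<longrightarrow> x \<in> V \<and> y \<in> V \<and> x \<noteq> y \<and> E y x)"

definition clique :: "'v set \<Rightarrow> ('v \<Rightarrow> 'v \<Rightarrow> bool) \<Rightarrow> 'v set \<Rightarrow> bool" where
  "clique V E K \<longleftrightarrow> K \<subseteq> V \<and> (\<forall>x\<in>K. \<forall>y\<in>K. x \<noteq> y \<longrightarrow> E x y)"

definition max_clique :: "'v set \<Rightarrow> ('v \<Rightarrow> 'v \<Rightarrow> bool) \<Rightarrow> 'v set \<Rightarrow> bool" where
  "max_clique V E K \<longleftrightarrow> clique V E K \<and> (\<forall>K'. clique V E K' \<and> K \<subseteq> K' \<longrightarrow> K' = K)"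

definition clique_equiv :: "'v set \<Rightarrow> ('v \<Rightarrow> 'v \<Rightarrow> bool) \<Rightarrow> 'v \<Rightarrow> 'v \<Rightarrow> bool" where
  "clique_equiv V E u v \<longleftrightarrow> (\<forall>K. max_clique V E K \<longrightarrow> (u \<in> K \<longleftrightarrow> v \<in> K))"

definition equiv_class :: "'v set \<Rightarrow> ('v \<Rightarrow> 'v \<Rightarrow> bool) \<Rightarrow> 'v \<Rightarrow> 'v set" where
  "equiv_class V E v = {u \<in> V. clique_equiv V E u v}"

definition classes_meeting :: "'v set \<Rightarrow> ('v \<Rightarrow> 'v \<Rightarrow> bool) \<Rightarrow> 'v set \<Rightarrow> nat" where
  "classes_meeting V E K = card {C \<in> equiv_class V E ` V. C \<inter> K \<noteq> {}}"

definition omega_tilde :: "'v set \<Rightarrow> ('v \<Rightarrow> 'v \<Rightarrow> bool) \<Rightarrow> nat" where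
  "omega_tilde V E = Max {classes_meeting V E K | K. max_clique V E K}"

definition induced_sub :: "'w set \<times> ('w \<Rightarrow> 'w \<Rightarrow> bool) \<Rightarrow> 'v set \<Rightarrow> ('v \<Rightarrow> 'v \<Rightarrow> bool) \<Rightarrow> bool" where
  "induced_sub H V E \<longleftrightarrow> (\<exists>h. inj_on h (fst H) \<and> h ` fst H \<subseteq> V \<and>
      (\<forall>x\<in>fst H. \<forall>y\<in>fst H. snd H x y \<longleftrightarrow> E (h x) (h y)))"

text \<open>Template graphs on vertices (False,i) = x_i and (True,i) = y_i, 1 \<le> i \<le> n.
  B is the bipartite relation (x_i y_j is an edge iff B i j); X is always a clique,
  Y is a clique iff cY.\<close>
definition tmpl_V :: "nat \<Rightarrow> (bool \<times> nat) set" where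
  "tmpl_V n = {(b, i). 1 \<le> i \<and> i \<le> n}"

definition tmpl :: "(nat \<Rightarrow> nat \<Rightarrow> bool) \<Rightarrow> bool \<Rightarrow> nat \<Rightarrow> (bool \<times> nat) set \<times> ((bool \<times> nat) \<Rightarrow> (bool \<times> nat) \<Rightarrow> bool)" where
  "tmpl B cY n = (tmpl_V n, (\<lambda>u v. u \<in> tmpl_V n \<and> v \<in> tmpl_V n \<and> u \<noteq> v \<and>
      ((\<not> fst u \<and> \<not> fst v) \<or> (cY \<and> fst u \<and> fst v)
       \<or> (\<not> fst u \<and> fst v \<and> B (snd u) (snd v))
       \<or> (fst u \<and> \<not> fst v \<and> B (snd v) (snd u)))))"

definition matching_rel :: "nat \<Rightarrow> nat \<Rightarrow> bool" where "matching_rel i j \<longleftrightarrow> i = j"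
definition antimatching_rel :: "nat \<Rightarrow> nat \<Rightarrow> bool" where "antimatching_rel i j \<longleftrightarrow> i \<noteq> j"
definition half_rel :: "nat \<Rightarrow> nat \<Rightarrow> bool" where "half_rel i j \<longleftrightarrow> i \<le> j"

definition M_KI where "M_KI = tmpl matching_rel False"
definition M_KK where "M_KK = tmpl matching_rel True"
definition A_KI where "A_KI = tmpl antimatching_rel False"
definition A_KK where "A_KK = tmpl antimatching_rel True"
definition H_KI where "H_KI = tmpl half_rel False"
definition H_KK where "H_KK = tmpl half_rel True"

definition family_A where "family_A = {M_KI, M_KK, A_KI, A_KK, H_KI, H_KK}"

definition p_fam :: "(nat \<Rightarrow> 'w set \<times> ('w \<Rightarrow> 'w \<Rightarrow> bool)) set \<Rightarrow> 'v set \<Rightarrow> ('v \<Rightarrow> 'v \<Rightarrow> bool) \<Rightarrow> nat" where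
  "p_fam F V E = Max (insert 0 {n. 1 \<le> n \<and> (\<exists>X\<in>F. induced_sub (X n) V E)})"

end

theory Submission
  imports Defs "HOL-Library.Ramsey"
begin

(* Lower bound: in an embedded template the vertices x_1, ..., x_n form a clique, and any two
   of them are separated by some y_t adjacent to exactly one of them; the maximal clique
   through that y_t contains one but not the other, so the x_i lie in n distinct classes
   that all meet one maximal clique.

   Upper bound: pick one vertex from each class meeting a maximal clique K that realises
   omega_tilde. Two vertices of K with the same neighbours outside K lie in the same maximal
   cliques, so the representatives are pairwise distinguished by vertices outside K.
   Splitting 2^d of them repeatedly along a distinguishing vertex gives a ladder x_k, w_k
   (k < d) with E x_k w_l = b_l for l < k and E x_k w_k = (not b_k). Ramsey's theorem for
   pairs, coloured by (b_k, E x_k w_l, E w_k w_l), leaves a homogeneous subladder, and each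
   of the four possible patterns between the x's and the w's is a matching, an anti-matching
   or a half-graph (the last possibly after reversing both sides). *)

section \<open>Maximal cliques and clique classes\<close>

lemma graph_edgeD:
  assumes "graph V E" "E x y"
  shows "x \<in> V" "y \<in> V" "x \<noteq> y" "E y x"
  using assms unfolding graph_def by blast+

lemma graph_sym: "graph V E \<Longrightarrow> E x y \<longleftrightarrow> E y x"
  unfolding graph_def by blast

lemma max_clique_superset:
  assumes g: "graph V E" and C: "Defs.clique V E C"
  obtains K where "max_clique V E K" "C \<subseteq> K"
proof -
  let ?A = "{K. Defs.clique V E K \<and> C \<subseteq> K}"
  have "?A \<subseteq> Pow V" by (auto simp: Defs.clique_def)
  then have "finite ?A"
    using g unfolding graph_def by (meson finite_Pow_iff finite_subset)
  moreover have "C \<in> ?A" using C by simp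
  ultimately obtain K where K: "K \<in> ?A" and maximal: "\<forall>K'\<in>?A. K \<subseteq> K' \<longrightarrow> K = K'"
    using finite_has_maximal[of ?A] by blast
  have "max_clique V E K"
    unfolding max_clique_def using K maximal by auto
  with K show thesis using that by blast
qed

lemma max_clique_nonadjacent:
  assumes g: "graph V E" and K: "max_clique V E K" and v: "v \<in> V" "v \<notin> K"
  obtains z where "z \<in> K" "z \<noteq> v" "\<not> E v z"
proof -
  have "Defs.clique V E (insert v K)" if adj: "\<forall>z\<in>K. z \<noteq> v \<longrightarrow> E v z"
    using K v(1) adj graph_sym[OF g] unfolding max_clique_def Defs.clique_def by auto
  then show thesis
    using K v(2) that unfolding max_clique_def by blast
qed

lemma clique_equiv_sym: "clique_equiv V E u v \<Longrightarrow> clique_equiv V E v u"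
  unfolding clique_equiv_def by blast

lemma self_in_equiv_class: "v \<in> V \<Longrightarrow> v \<in> equiv_class V E v"
  unfolding equiv_class_def clique_equiv_def by simp

lemma equiv_class_eq: "clique_equiv V E u v \<Longrightarrow> equiv_class V E u = equiv_class V E v"
  unfolding equiv_class_def clique_equiv_def by blast

lemma equiv_class_eq_iff:
  assumes "u \<in> V"
  shows "equiv_class V E u = equiv_class V E v \<longleftrightarrow> clique_equiv V E u v"
  using assms equiv_class_eq[of V E u v] self_in_equiv_class[of u V E]
  unfolding equiv_class_def by blast

lemma classes_meeting_eq_card_image:
  assumes "K \<subseteq> V"
  shows "classes_meeting V E K = card (equiv_class V E ` K)"
proof -
  have "{C \<in> equiv_class V E ` V. C \<inter> K \<noteq> {}} = equiv_class V E ` K"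
  proof (intro equalityI subsetI)
    fix C assume "C \<in> {C \<in> equiv_class V E ` V. C \<inter> K \<noteq> {}}"
    then obtain u v where "v \<in> V" "C = equiv_class V E v" "u \<in> C" "u \<in> K" by auto
    then have "clique_equiv V E u v" by (simp add: equiv_class_def)
    then have "C = equiv_class V E u"
      using \<open>C = equiv_class V E v\<close> equiv_class_eq by metis
    then show "C \<in> equiv_class V E ` K" using \<open>u \<in> K\<close> by blast
  next
    fix C assume "C \<in> equiv_class V E ` K"
    then obtain u where "u \<in> K" "C = equiv_class V E u" by blast
    with assms self_in_equiv_class[of u V E]
    show "C \<in> {C \<in> equiv_class V E ` V. C \<inter> K \<noteq> {}}" by blast
  qed
  then show ?thesis unfolding classes_meeting_def by simp
qed

lemma finite_max_cliques: "graph V E \<Longrightarrow> finite {K. max_clique V E K}"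
  unfolding graph_def max_clique_def Defs.clique_def
  by (rule finite_subset[of _ "Pow V"]) auto

lemma classes_meeting_le_omega_tilde:
  "graph V E \<Longrightarrow> max_clique V E K \<Longrightarrow> classes_meeting V E K \<le> omega_tilde V E"
  unfolding omega_tilde_def by (rule Max_ge) (auto simp: finite_max_cliques)

lemma omega_tilde_attained:
  assumes g: "graph V E"
  obtains K where "max_clique V E K" "classes_meeting V E K = omega_tilde V E"
proof -
  obtain K0 where "max_clique V E K0"
    using max_clique_superset[OF g, of "{}"] by (auto simp: Defs.clique_def)
  then have "omega_tilde V E \<in> {classes_meeting V E K | K. max_clique V E K}"
    unfolding omega_tilde_def by (intro Max_in) (auto simp: finite_max_cliques[OF g])
  then show thesis using that by auto
qed

section \<open>Templates force many classes\<close>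

lemma not_clique_equiv_if_separated:
  assumes g: "graph V E" and uw: "E u w" and vw: "\<not> E v w" "v \<noteq> w"
  shows "\<not> clique_equiv V E u v"
proof -
  have "Defs.clique V E {u, w}"
    using graph_edgeD[OF g uw] uw unfolding Defs.clique_def by auto
  then obtain K where K: "max_clique V E K" "{u, w} \<subseteq> K"
    using max_clique_superset[OF g] by blast
  have "v \<notin> K"
    using K vw unfolding max_clique_def Defs.clique_def by blast
  with K show ?thesis unfolding clique_equiv_def by blast
qed

lemma card_inequivalent_le_omega_tilde:
  assumes g: "graph V E" and S: "Defs.clique V E S"
    and ineq: "\<And>u v. u \<in> S \<Longrightarrow> v \<in> S \<Longrightarrow> u \<noteq> v \<Longrightarrow> \<not> clique_equiv V E u v"
  shows "card S \<le> omega_tilde V E"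
proof -
  obtain K where K: "max_clique V E K" "S \<subseteq> K"
    using max_clique_superset[OF g S] .
  have KV: "K \<subseteq> V" and finV: "finite V"
    using K(1) g unfolding max_clique_def Defs.clique_def graph_def by auto
  have "inj_on (equiv_class V E) S"
  proof (rule inj_onI)
    fix u v assume "u \<in> S" "v \<in> S" "equiv_class V E u = equiv_class V E v"
    then show "u = v"
      using ineq equiv_class_eq_iff[of u V E v] K(2) KV by blast
  qed
  then have "card S = card (equiv_class V E ` S)"
    by (simp add: card_image)
  also have "\<dots> \<le> card (equiv_class V E ` K)"
    using K(2) finite_subset[OF KV finV] by (intro card_mono image_mono) auto
  also have "\<dots> = classes_meeting V E K"
    using KV by (simp add: classes_meeting_eq_card_image)
  also have "\<dots> \<le> omega_tilde V E"
    using classes_meeting_le_omega_tilde[OF g K(1)] .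
  finally show ?thesis .
qed

lemma induced_tmpl_le_omega_tilde:
  assumes g: "graph V E" and emb: "induced_sub (tmpl B cY n) V E"
    and rows: "\<And>i j. i \<in> {1..n} \<Longrightarrow> j \<in> {1..n} \<Longrightarrow> i \<noteq> j \<Longrightarrow> \<exists>t\<in>{1..n}. B i t \<noteq> B j t"
  shows "n \<le> omega_tilde V E"
proof -
  obtain h where h: "inj_on h (tmpl_V n)" "h ` tmpl_V n \<subseteq> V"
    and adj: "\<And>u v. u \<in> tmpl_V n \<Longrightarrow> v \<in> tmpl_V n \<Longrightarrow> snd (tmpl B cY n) u v \<longleftrightarrow> E (h u) (h v)"
    using emb unfolding induced_sub_def tmpl_def by auto
  define hx where "hx i = h (False, i)" for i
  define hy where "hy i = h (True, i)" for i
  have XX: "E (hx i) (hx j) \<longleftrightarrow> i \<noteq> j"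
    and XY: "E (hx i) (hy j) \<longleftrightarrow> B i j"
    and XY_ne: "hx i \<noteq> hy j" if "i \<in> {1..n}" "j \<in> {1..n}" for i j
    using adj[of "(False, i)" "(False, j)"] adj[of "(False, i)" "(True, j)"]
      inj_onD[OF h(1), of "(False, i)" "(True, j)"] that
    unfolding hx_def hy_def by (auto simp: tmpl_def tmpl_V_def)
  have "inj_on hx {1..n}"
    using h(1) unfolding hx_def inj_on_def tmpl_V_def by auto
  then have "card (hx ` {1..n}) = n"
    by (simp add: card_image)
  moreover have "Defs.clique V E (hx ` {1..n})"
    using h(2) XX unfolding Defs.clique_def hx_def tmpl_V_def by auto
  moreover have "\<not> clique_equiv V E u v"
    if uv: "u \<in> hx ` {1..n}" "v \<in> hx ` {1..n}" "u \<noteq> v" for u v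
  proof -
    obtain i j where ij: "i \<in> {1..n}" "j \<in> {1..n}" "u = hx i" "v = hx j"
      using uv(1,2) by blast
    then obtain t where t: "t \<in> {1..n}" "B i t \<noteq> B j t"
      using rows uv(3) by blast
    show ?thesis
    proof (cases "B i t")
      case True
      then show ?thesis
        using not_clique_equiv_if_separated[OF g, of u "hy t" v] XY XY_ne ij t by auto
    next
      case False
      then show ?thesis
        using not_clique_equiv_if_separated[OF g, of v "hy t" u] XY XY_ne ij t
        by (auto dest: clique_equiv_sym)
    qed
  qed
  ultimately show ?thesis
    using card_inequivalent_le_omega_tilde[OF g] by metis
qed

lemma family_A_iff:
  "T \<in> family_A \<longleftrightarrow> (\<exists>B cY. T = tmpl B cY \<and> B \<in> {matching_rel, antimatching_rel, half_rel})"
  unfolding family_A_def M_KI_def M_KK_def A_KI_def A_KK_def H_KI_def H_KK_def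
  by (auto; metis (full_types))

lemma family_A_rows_differ:
  assumes "B \<in> {matching_rel, antimatching_rel, half_rel}"
    and "i \<in> {1..n}" "j \<in> {1..n}" "i \<noteq> j"
  shows "\<exists>t\<in>{1..n}. B i t \<noteq> B j t"
  using assms
  by (auto simp: matching_rel_def antimatching_rel_def half_rel_def intro!: bexI[of _ "min i j"])

lemma family_A_size_le_omega_tilde:
  assumes g: "graph V E" and T: "T \<in> family_A" and emb: "induced_sub (T n) V E"
  shows "n \<le> omega_tilde V E"
proof -
  obtain B cY where "T = tmpl B cY" "B \<in> {matching_rel, antimatching_rel, half_rel}"
    using T unfolding family_A_iff by blast
  then show ?thesis
    using induced_tmpl_le_omega_tilde[OF g] family_A_rows_differ emb by blast
qed

lemma p_fam_le:
  assumes "\<And>n X. 1 \<le> n \<Longrightarrow> X \<in> F \<Longrightarrow> induced_sub (X n) V E \<Longrightarrow> n \<le> b"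
  shows "p_fam F V E \<le> b"
  unfolding p_fam_def using assms
  by (intro Max.boundedI) (auto intro: finite_subset[of _ "{..b}"])

lemma le_p_fam:
  assumes "\<And>n X. 1 \<le> n \<Longrightarrow> X \<in> F \<Longrightarrow> induced_sub (X n) V E \<Longrightarrow> n \<le> b"
    and "1 \<le> n" "X \<in> F" "induced_sub (X n) V E"
  shows "n \<le> p_fam F V E"
  unfolding p_fam_def using assms
  by (intro Max_ge) (auto intro: finite_subset[of _ "{..b}"])

section \<open>Many classes force a template\<close>

lemma clique_equiv_if_same_outer_neighbours:
  assumes g: "graph V E" and K: "Defs.clique V E K" and uv: "u \<in> K" "v \<in> K"
    and same: "\<And>w. w \<in> V - K \<Longrightarrow> E u w \<longleftrightarrow> E v w"
  shows "clique_equiv V E u v"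
proof -
  have "b \<in> K'"
    if ab: "a \<in> K" "b \<in> K" and same': "\<forall>w\<in>V - K. E a w \<longleftrightarrow> E b w"
      and K': "max_clique V E K'" "a \<in> K'" for a b K'
  proof (rule ccontr)
    assume "b \<notin> K'"
    moreover have "b \<in> V" using K ab(2) by (auto simp: Defs.clique_def)
    ultimately obtain z where z: "z \<in> K'" "z \<noteq> b" "\<not> E b z"
      using max_clique_nonadjacent[OF g K'(1)] by blast
    have K'c: "Defs.clique V E K'" using K'(1) by (simp add: max_clique_def)
    have "z \<notin> K" using K ab(2) z by (auto simp: Defs.clique_def)
    moreover have "z \<in> V" using K'c z(1) by (auto simp: Defs.clique_def)
    moreover have "E a z"
      using K K'c ab K'(2) z \<open>b \<notin> K'\<close> graph_sym[OF g] unfolding Defs.clique_def by metis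
    ultimately show False using same' z(3) by blast
  qed
  then show ?thesis
    unfolding clique_equiv_def using uv same by blast
qed

lemma omega_tilde_distinguished_set:
  assumes g: "graph V E"
  obtains K S where "Defs.clique V E K" "S \<subseteq> K" "card S = omega_tilde V E"
    "\<And>a a'. a \<in> S \<Longrightarrow> a' \<in> S \<Longrightarrow> a \<noteq> a' \<Longrightarrow> \<exists>w\<in>V - K. E a w \<noteq> E a' w"
proof -
  obtain K where K: "max_clique V E K" "classes_meeting V E K = omega_tilde V E"
    using omega_tilde_attained[OF g] .
  have Kc: "Defs.clique V E K" and KV: "K \<subseteq> V"
    using K(1) by (auto simp: max_clique_def Defs.clique_def)
  have "\<exists>S\<subseteq>K. inj_on (equiv_class V E) S \<and> equiv_class V E ` K = equiv_class V E ` S"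
    by (simp add: subset_image_inj[symmetric])
  then obtain S where S: "S \<subseteq> K" "inj_on (equiv_class V E) S"
    "equiv_class V E ` K = equiv_class V E ` S"
    by blast
  have "card S = card (equiv_class V E ` K)"
    using S(2,3) by (simp add: card_image)
  also have "\<dots> = omega_tilde V E"
    using K(2) KV by (simp add: classes_meeting_eq_card_image)
  finally have card: "card S = omega_tilde V E" .
  have distinguished: "\<exists>w\<in>V - K. E a w \<noteq> E a' w"
    if a: "a \<in> S" "a' \<in> S" "a \<noteq> a'" for a a'
  proof (rule ccontr)
    assume "\<not> (\<exists>w\<in>V - K. E a w \<noteq> E a' w)"
    then have "clique_equiv V E a a'"
      using S(1) a by (intro clique_equiv_if_same_outer_neighbours[OF g Kc]) blast+
    then have "equiv_class V E a = equiv_class V E a'"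
      by (rule equiv_class_eq)
    then show False
      using inj_onD[OF S(2) _ a(1,2)] a(3) by blast
  qed
  show thesis
    using Kc S(1) card distinguished by (rule that)
qed

lemma large_bool_fiber:
  fixes P :: "'a \<Rightarrow> bool"
  assumes "finite S" "2 * m \<le> card S"
  obtains \<beta> where "m \<le> card {s \<in> S. P s = \<beta>}"
proof -
  have "S = {s \<in> S. P s = True} \<union> {s \<in> S. P s = False}" by auto
  then have "card S \<le> card {s \<in> S. P s = True} + card {s \<in> S. P s = False}"
    by (metis card_Un_le)
  then show thesis using that[of True] that[of False] assms(2) by linarith
qed

lemma distinguishing_ladder:
  fixes R :: "'a \<Rightarrow> 'b \<Rightarrow> bool"
  assumes "finite S" "2 ^ d \<le> card S"
    and "\<And>a a'. a \<in> S \<Longrightarrow> a' \<in> S \<Longrightarrow> a \<noteq> a' \<Longrightarrow> \<exists>w\<in>W. R a w \<noteq> R a' w"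
  shows "\<exists>x w b. (\<forall>k<d. x k \<in> S \<and> w k \<in> W) \<and> (\<forall>k<d. \<forall>l<k. R (x k) (w l) = b l)
     \<and> (\<forall>k<d. R (x k) (w k) \<noteq> b k)"
  using assms
proof (induction d arbitrary: S)
  case 0
  then show ?case by simp
next
  case (Suc d)
  have "2 \<le> card S"
    using order_trans[OF power_increasing[of 1 "Suc d" "2::nat"] Suc.prems(2)] by simp
  then obtain T where "T \<subseteq> S" "card T = 2"
    using obtain_subset_with_card_n by metis
  then obtain a a' where aa: "a \<in> S" "a' \<in> S" "a \<noteq> a'"
    by (auto simp: card_2_iff)
  then obtain w0 where w0: "w0 \<in> W" "R a w0 \<noteq> R a' w0"
    using Suc.prems(3) by blast
  define S' where "S' \<beta> = {s \<in> S. R s w0 = \<beta>}" for \<beta>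
  obtain \<beta> where big: "2 ^ d \<le> card (S' \<beta>)"
    using large_bool_fiber[where S = S and m = "2 ^ d" and P = "\<lambda>s. R s w0"] Suc.prems(1,2)
    unfolding S'_def by auto
  obtain x0 where x0: "x0 \<in> S" "R x0 w0 \<noteq> \<beta>"
    using aa w0 by blast
  have "finite (S' \<beta>)" using Suc.prems(1) by (simp add: S'_def)
  moreover have "\<exists>w\<in>W. R a w \<noteq> R a' w" if "a \<in> S' \<beta>" "a' \<in> S' \<beta>" "a \<noteq> a'" for a a'
    using Suc.prems(3) that by (simp add: S'_def)
  ultimately obtain x w b where x: "\<forall>k<d. x k \<in> S' \<beta> \<and> w k \<in> W"
    and below: "\<forall>k<d. \<forall>l<k. R (x k) (w l) = b l" and diag: "\<forall>k<d. R (x k) (w k) \<noteq> b k"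
    using Suc.IH[of "S' \<beta>"] big by blast
  show ?case
  proof (intro exI conjI allI impI)
    fix k assume "k < Suc d"
    then show "case_nat x0 x k \<in> S" "case_nat w0 w k \<in> W"
      and "R (case_nat x0 x k) (case_nat w0 w k) \<noteq> case_nat \<beta> b k"
      using x x0 w0 diag by (auto simp: S'_def split: nat.split)
  next
    fix k l assume "k < Suc d" "l < k"
    then show "R (case_nat x0 x k) (case_nat w0 w l) = case_nat \<beta> b l"
      using x below by (auto simp: S'_def less_Suc_eq_0_disj split: nat.split)
  qed
qed

lemma ramsey_pairs_increasing:
  fixes m :: nat
  shows "\<exists>N. \<forall>col :: nat \<Rightarrow> nat \<Rightarrow> ('c :: finite). \<exists>\<phi> c. strict_mono_on {..<m} \<phi> \<and> (\<forall>j<m. \<phi> j < N)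
     \<and> (\<forall>j j'. j < j' \<longrightarrow> j' < m \<longrightarrow> col (\<phi> j) (\<phi> j') = c)"
proof -
  obtain enc :: "'c \<Rightarrow> nat" where enc: "bij_betw enc UNIV {0..<card (UNIV :: 'c set)}"
    using ex_bij_betw_finite_nat[of "UNIV :: 'c set"] by auto
  obtain N :: nat where N: "partn_lst {..<N} (replicate (card (UNIV :: 'c set)) m) 2"
    using ramsey_full by blast
  have "\<exists>\<phi> c. strict_mono_on {..<m} \<phi> \<and> (\<forall>j<m. \<phi> j < N)
     \<and> (\<forall>j j'. j < j' \<longrightarrow> j' < m \<longrightarrow> col (\<phi> j) (\<phi> j') = c)" for col :: "nat \<Rightarrow> nat \<Rightarrow> 'c"
  proof -
    define f where "f e = enc (col (Min e) (Max e))" for e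
    have "f \<in> nsets {..<N} 2 \<rightarrow> {..<card (UNIV :: 'c set)}"
      using enc unfolding f_def bij_betw_def by auto
    then obtain i H where H: "H \<in> nsets {..<N} m" and hom: "f ` nsets H 2 \<subseteq> {i}"
      using partn_lstE[OF N] by (metis length_replicate nth_replicate)
    then have finH: "finite H" and cardH: "card H = m" and HN: "H \<subseteq> {..<N}"
      by (auto simp: nsets_def)
    obtain \<phi> where \<phi>: "bij_betw \<phi> {..<m} H" "strict_mono_on {..<m} \<phi>"
      using ex_bij_betw_strict_mono_card[OF finH] cardH by metis
    have "col (\<phi> j) (\<phi> j') = inv enc i" if "j < j'" "j' < m" for j j'
    proof -
      have "\<phi> j < \<phi> j'" "\<phi> j \<in> H" "\<phi> j' \<in> H"
        using \<phi> that by (auto simp: strict_mono_on_def bij_betw_def)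
      then have "{\<phi> j, \<phi> j'} \<in> nsets H 2" by simp
      then have "f {\<phi> j, \<phi> j'} = i" using hom by blast
      then have "enc (col (\<phi> j) (\<phi> j')) = i"
        using \<open>\<phi> j < \<phi> j'\<close> by (simp add: f_def)
      then show ?thesis
        using enc by (metis bij_betw_imp_inj_on inv_f_f)
    qed
    moreover have "\<forall>j<m. \<phi> j < N" using \<phi>(1) HN by (auto simp: bij_betw_def)
    ultimately show ?thesis using \<phi>(2) by blast
  qed
  then show ?thesis by blast
qed

lemma induced_sub_tmplI:
  assumes g: "graph V E"
    and inV: "hx ` {1..n} \<subseteq> V" "hy ` {1..n} \<subseteq> V"
    and inj: "inj_on hx {1..n}" "inj_on hy {1..n}"
    and disj: "\<And>i j. i \<in> {1..n} \<Longrightarrow> j \<in> {1..n} \<Longrightarrow> hx i \<noteq> hy j"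
    and XX: "\<And>i j. i \<in> {1..n} \<Longrightarrow> j \<in> {1..n} \<Longrightarrow> i \<noteq> j \<Longrightarrow> E (hx i) (hx j)"
    and YY: "\<And>i j. i \<in> {1..n} \<Longrightarrow> j \<in> {1..n} \<Longrightarrow> i \<noteq> j \<Longrightarrow> E (hy i) (hy j) \<longleftrightarrow> cY"
    and XY: "\<And>i j. i \<in> {1..n} \<Longrightarrow> j \<in> {1..n} \<Longrightarrow> E (hx i) (hy j) \<longleftrightarrow> B i j"
  shows "induced_sub (tmpl B cY n) V E"
proof -
  define h where "h = (\<lambda>(y, i). if y then hy i else hx i)"
  have tV: "(y, i) \<in> tmpl_V n \<longleftrightarrow> i \<in> {1..n}" for y i
    by (simp add: tmpl_V_def)
  have irrefl: "\<not> E v v" for v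
    using graph_edgeD(3)[OF g] by blast
  have "inj_on h (tmpl_V n)"
  proof (rule inj_onI, clarify)
    fix y i z j assume "(y, i) \<in> tmpl_V n" "(z, j) \<in> tmpl_V n" "h (y, i) = h (z, j)"
    then show "y = z \<and> i = j"
      using disj[of i j] disj[of j i] inj_onD[OF inj(1), of i j] inj_onD[OF inj(2), of i j]
      by (cases y; cases z) (simp_all add: h_def tV)
  qed
  moreover have "h ` tmpl_V n \<subseteq> V"
    using inV by (auto simp: h_def tmpl_V_def image_subset_iff)
  moreover have "snd (tmpl B cY n) (y, i) (z, j) \<longleftrightarrow> E (h (y, i)) (h (z, j))"
    if "i \<in> {1..n}" "j \<in> {1..n}" for y i z j
  proof -
    have "E (hx i) (hx j) \<longleftrightarrow> i \<noteq> j" "E (hy i) (hy j) \<longleftrightarrow> i \<noteq> j \<and> cY"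
      using XX[OF that] YY[OF that] irrefl by auto
    moreover have "E (hx i) (hy j) \<longleftrightarrow> B i j" "E (hy i) (hx j) \<longleftrightarrow> B j i"
      using XY[OF that] XY[OF that(2,1)] graph_sym[OF g] by auto
    ultimately show ?thesis
      using that by (cases y; cases z) (simp_all add: tmpl_def tmpl_V_def h_def)
  qed
  ultimately show ?thesis
    unfolding induced_sub_def by (auto simp: tmpl_def tmpl_V_def)
qed

lemma tmpl_in_family_A:
  "B \<in> {matching_rel, antimatching_rel, half_rel} \<Longrightarrow> tmpl B cY \<in> family_A"
  by (auto simp: family_A_iff)

lemma family_A_induced_of_pattern:
  assumes g: "graph V E" and K: "Defs.clique V E K"
    and XK: "\<And>j. j \<le> n \<Longrightarrow> X j \<in> K" and YK: "\<And>j. j \<le> n \<Longrightarrow> Y j \<in> V - K"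
    and XY: "\<And>j j'. j \<le> n \<Longrightarrow> j' \<le> n \<Longrightarrow>
      E (X j) (Y j') \<longleftrightarrow> (if j < j' then \<gamma> else if j' < j then \<beta> else \<not> \<beta>)"
    and YY: "\<And>j j'. j < j' \<Longrightarrow> j' \<le> n \<Longrightarrow> E (Y j) (Y j') \<longleftrightarrow> \<epsilon>"
  shows "\<exists>T\<in>family_A. induced_sub (T n) V E"
proof -
  have distinct: "X j \<noteq> X j' \<and> Y j \<noteq> Y j'" if "j < j'" "j' \<le> n" for j j'
    using XY[of j' j] XY[of j j] XY[of j' j'] that by auto
  have "j = j'" if "j \<le> n" "j' \<le> n" "X j = X j' \<or> Y j = Y j'" for j j'
    using distinct[of j j'] distinct[of j' j] that by (cases j j' rule: linorder_cases) auto
  then have X_inj: "inj_on X {..n}" and Y_inj: "inj_on Y {..n}"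
    unfolding inj_on_def atMost_iff by blast+
  have KV: "K \<subseteq> V" using K by (simp add: Defs.clique_def)
  have emb: "induced_sub (tmpl B \<epsilon> n) V E"
    if \<sigma>: "\<sigma> ` {1..n} \<subseteq> {..n}" "inj_on \<sigma> {1..n}" and \<tau>: "\<tau> ` {1..n} \<subseteq> {..n}" "inj_on \<tau> {1..n}"
      and B: "\<And>i j. i \<in> {1..n} \<Longrightarrow> j \<in> {1..n} \<Longrightarrow> E (X (\<sigma> i)) (Y (\<tau> j)) \<longleftrightarrow> B i j"
    for \<sigma> \<tau> B
  proof (rule induced_sub_tmplI[OF g, where hx = "\<lambda>i. X (\<sigma> i)" and hy = "\<lambda>i. Y (\<tau> i)"])
    show "(\<lambda>i. X (\<sigma> i)) ` {1..n} \<subseteq> V" "(\<lambda>i. Y (\<tau> i)) ` {1..n} \<subseteq> V"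
      using \<sigma>(1) \<tau>(1) XK YK KV by (auto simp: image_subset_iff)
    show "inj_on (\<lambda>i. X (\<sigma> i)) {1..n}" "inj_on (\<lambda>i. Y (\<tau> i)) {1..n}"
      using comp_inj_on[OF \<sigma>(2) inj_on_subset[OF X_inj \<sigma>(1)]]
        comp_inj_on[OF \<tau>(2) inj_on_subset[OF Y_inj \<tau>(1)]] by (simp_all add: comp_def)
    fix i j assume ij: "i \<in> {1..n}" "j \<in> {1..n}"
    then have le: "\<sigma> i \<le> n" "\<sigma> j \<le> n" "\<tau> i \<le> n" "\<tau> j \<le> n"
      using \<sigma>(1) \<tau>(1) by (auto simp: image_subset_iff)
    show "X (\<sigma> i) \<noteq> Y (\<tau> j)"
      using XK[OF le(1)] YK[OF le(4)] by auto
    show "E (X (\<sigma> i)) (Y (\<tau> j)) \<longleftrightarrow> B i j"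
      using B[OF ij] .
    assume "i \<noteq> j"
    then have ne: "\<sigma> i \<noteq> \<sigma> j" "\<tau> i \<noteq> \<tau> j"
      using ij inj_onD[OF \<sigma>(2)] inj_onD[OF \<tau>(2)] by blast+
    show "E (X (\<sigma> i)) (X (\<sigma> j))"
      using K XK[OF le(1)] XK[OF le(2)] inj_onD[OF X_inj, of "\<sigma> i" "\<sigma> j"] ne(1) le(1,2)
      unfolding Defs.clique_def by auto
    show "E (Y (\<tau> i)) (Y (\<tau> j)) \<longleftrightarrow> \<epsilon>"
      using ne(2) le(3,4) YY[of "\<tau> i" "\<tau> j"] YY[of "\<tau> j" "\<tau> i"] graph_sym[OF g]
      by (cases "\<tau> i < \<tau> j") auto
  qed
  consider (antimatching) \<beta> \<gamma> | (half) "\<not> \<beta>" \<gamma> | (matching) "\<not> \<beta>" "\<not> \<gamma>"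
    | (reversed_half) \<beta> "\<not> \<gamma>"
    by blast
  then have "\<exists>B\<in>{matching_rel, antimatching_rel, half_rel}. induced_sub (tmpl B \<epsilon> n) V E"
  proof cases
    case antimatching
    have "induced_sub (tmpl antimatching_rel \<epsilon> n) V E"
      by (rule emb[where \<sigma> = id and \<tau> = id])
        (use antimatching XY in \<open>auto simp: antimatching_rel_def\<close>)
    then show ?thesis by blast
  next
    case half
    have "induced_sub (tmpl half_rel \<epsilon> n) V E"
      by (rule emb[where \<sigma> = id and \<tau> = id])
        (use half XY in \<open>auto simp: half_rel_def\<close>)
    then show ?thesis by blast
  next
    case matching
    have "induced_sub (tmpl matching_rel \<epsilon> n) V E"
      by (rule emb[where \<sigma> = id and \<tau> = id])
        (use matching XY in \<open>auto simp: matching_rel_def\<close>)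
    then show ?thesis by blast
  next
    case reversed_half
    \<comment> \<open>Here E (X j) (Y j') holds iff j' < j, a half-graph once both sides are read backwards.\<close>
    have "induced_sub (tmpl half_rel \<epsilon> n) V E"
    proof (rule emb[where \<sigma> = "\<lambda>i. Suc n - i" and \<tau> = "\<lambda>j. n - j"])
      fix i j assume "i \<in> {1..n}" "j \<in> {1..n}"
      moreover have "Suc n - i \<le> n" "n - j \<le> n"
        using \<open>i \<in> {1..n}\<close> by auto
      ultimately show "E (X (Suc n - i)) (Y (n - j)) \<longleftrightarrow> half_rel i j"
        using XY[of "Suc n - i" "n - j"] reversed_half by (auto simp: half_rel_def)
    qed (auto simp: inj_on_def)
    then show ?thesis by blast
  qed
  then show ?thesis
    using tmpl_in_family_A by blast
qed

lemma family_A_induced_of_homogeneous_ladder: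
  assumes g: "graph V E" and K: "Defs.clique V E K"
    and xw: "\<forall>k<r. x k \<in> K \<and> w k \<in> V - K"
    and below: "\<forall>k<r. \<forall>l<k. E (x k) (w l) = b l" and diag: "\<forall>k<r. E (x k) (w k) \<noteq> b k"
    and mono: "strict_mono_on {..<n + 2} \<phi>" and \<phi>r: "\<forall>j<n + 2. \<phi> j < r"
    and hom: "\<And>j j'. j < j' \<Longrightarrow> j' < n + 2 \<Longrightarrow>
      (b (\<phi> j), E (x (\<phi> j)) (w (\<phi> j')), E (w (\<phi> j)) (w (\<phi> j'))) = (\<beta>, \<gamma>, \<epsilon>)"
  shows "\<exists>T\<in>family_A. induced_sub (T n) V E"
proof (rule family_A_induced_of_pattern[OF g K,
      where X = "\<lambda>j. x (\<phi> j)" and Y = "\<lambda>j. w (\<phi> j)" and \<beta> = \<beta> and \<gamma> = \<gamma> and \<epsilon> = \<epsilon>])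
  \<comment> \<open>The extra index n + 1 only serves to make b constant on the indices 0, ..., n.\<close>
  have b_const: "b (\<phi> j) = \<beta>" if "j \<le> n" for j
    using hom[of j "n + 1"] that by simp
  fix j j' assume j: "j \<le> n"
  then show "x (\<phi> j) \<in> K" "w (\<phi> j) \<in> V - K"
    using xw \<phi>r by auto
  assume j': "j' \<le> n"
  show "E (x (\<phi> j)) (w (\<phi> j')) \<longleftrightarrow> (if j < j' then \<gamma> else if j' < j then \<beta> else \<not> \<beta>)"
  proof (cases j j' rule: linorder_cases)
    case less
    then show ?thesis using hom[of j j'] j' by simp
  next
    case equal
    then show ?thesis using diag \<phi>r b_const j by auto
  next
    case greater
    then have "\<phi> j' < \<phi> j"
      using mono j by (auto simp: strict_mono_on_def)
    then show ?thesis using below \<phi>r b_const j j' greater by auto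
  qed
next
  fix j j' assume "j < j'" "j' \<le> n"
  then show "E (w (\<phi> j)) (w (\<phi> j')) \<longleftrightarrow> \<epsilon>"
    using hom[of j j'] by simp
qed

lemma family_A_induced_if_omega_tilde_large:
  "\<exists>N. \<forall>(V :: 'v set) E. graph V E \<longrightarrow> N \<le> omega_tilde V E \<longrightarrow>
     (\<exists>T\<in>family_A. induced_sub (T n) V E)"
proof -
  obtain r where r: "\<forall>col :: nat \<Rightarrow> nat \<Rightarrow> bool \<times> bool \<times> bool. \<exists>\<phi> c.
      strict_mono_on {..<n + 2} \<phi> \<and> (\<forall>j<n + 2. \<phi> j < r)
      \<and> (\<forall>j j'. j < j' \<longrightarrow> j' < n + 2 \<longrightarrow> col (\<phi> j) (\<phi> j') = c)"
    by (rule exE[OF ramsey_pairs_increasing[of "n + 2"]])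
  have "\<exists>T\<in>family_A. induced_sub (T n) V E"
    if g: "graph V E" and large: "2 ^ r \<le> omega_tilde V E" for V :: "'v set" and E
  proof -
    obtain K S where K: "Defs.clique V E K" and S: "S \<subseteq> K" "card S = omega_tilde V E"
      and dist: "\<And>a a'. a \<in> S \<Longrightarrow> a' \<in> S \<Longrightarrow> a \<noteq> a' \<Longrightarrow> \<exists>w\<in>V - K. E a w \<noteq> E a' w"
      using omega_tilde_distinguished_set[OF g] by blast
    have "K \<subseteq> V" "finite V"
      using K g by (simp_all add: Defs.clique_def graph_def)
    then have fin: "finite S"
      using S(1) by (meson finite_subset)
    have card: "2 ^ r \<le> card S"
      using S(2) large by simp
    obtain x w b where xw: "\<forall>k<r. x k \<in> S \<and> w k \<in> V - K"
      and below: "\<forall>k<r. \<forall>l<k. E (x k) (w l) = b l" and diag: "\<forall>k<r. E (x k) (w k) \<noteq> b k"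
      using distinguishing_ladder[where R = E and W = "V - K", OF fin card dist] by blast
    obtain \<phi> c where mono: "strict_mono_on {..<n + 2} \<phi>" and \<phi>r: "\<forall>j<n + 2. \<phi> j < r"
      and hom: "\<And>j j'. j < j' \<Longrightarrow> j' < n + 2 \<Longrightarrow>
        (b (\<phi> j), E (x (\<phi> j)) (w (\<phi> j')), E (w (\<phi> j)) (w (\<phi> j'))) = c"
      using spec[OF r, of "\<lambda>k l. (b k, E (x k) (w l), E (w k) (w l))"] by blast
    obtain \<beta> \<gamma> \<epsilon> where c: "c = (\<beta>, \<gamma>, \<epsilon>)"
      by (cases c)
    have "\<forall>k<r. x k \<in> K \<and> w k \<in> V - K"
      using xw S(1) by blast
    from family_A_induced_of_homogeneous_ladder[OF g K this below diag mono \<phi>r hom[unfolded c]]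
    show ?thesis .
  qed
  then show ?thesis by blast
qed

lemma p_fam_family_A_le_omega_tilde:
  "graph V E \<Longrightarrow> p_fam family_A V E \<le> omega_tilde V E"
  by (rule p_fam_le) (rule family_A_size_le_omega_tilde)

theorem theorem7p5:
  shows "\<exists>f g :: nat \<Rightarrow> nat. \<forall>(V :: nat set) E. graph V E \<longrightarrow>
     p_fam family_A V E \<le> f (omega_tilde V E) \<and> omega_tilde V E \<le> g (p_fam family_A V E)"
proof -
  have "\<forall>n. \<exists>N. \<forall>(V :: nat set) E. graph V E \<longrightarrow> N \<le> omega_tilde V E \<longrightarrow>
      (\<exists>T\<in>family_A. induced_sub (T n) V E)"
    using family_A_induced_if_omega_tilde_large by blast
  then obtain N where N: "\<And>n (V :: nat set) E. graph V E \<Longrightarrow> N n \<le> omega_tilde V E \<Longrightarrow>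
      \<exists>T\<in>family_A. induced_sub (T n) V E"
    by (metis choice)
  have upper: "omega_tilde V E \<le> N (p_fam family_A V E + 1)"
    if g: "graph V E" for V :: "nat set" and E
  proof (rule ccontr)
    assume "\<not> ?thesis"
    then obtain T where "T \<in> family_A" "induced_sub (T (p_fam family_A V E + 1)) V E"
      using N[OF g] by (meson nat_le_linear)
    then have "p_fam family_A V E + 1 \<le> p_fam family_A V E"
      by (intro le_p_fam[where X = T]) (auto intro: family_A_size_le_omega_tilde[OF g])
    then show False by simp
  qed
  show ?thesis
    using p_fam_family_A_le_omega_tilde upper
    by (intro exI[of _ id] exI[of _ "\<lambda>m. N (m + 1)"]) auto
qed

end
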